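(* Let $\star$ be a $t$-definer, let $(X_1,d_1^\star),\dots,(X_n,d_n^\star)$ be $\star$-metric spaces with $d_i^\star(x,y)\le 1$ for all $x,y\in X_i$ and $1\le i\le n$, and let $X=\bigoplus_{i=1}^n X_i$ be their disjoint union. Define $d_q^\star$ on $X$ by $d_q^\star(x,y)=d_i^\star(x,y)$ if $x,y\in X_i$ for some $i$, and $d_q^\star(x,y)=1$ otherwise. Then $(X,d_q^\star)$ is totally bounded if and only if every $(X_i,d_i^\star)$ is totally bounded.
   Context: A $t$-definer is a function $\star:[0,\infty)\times[0,\infty)\to[0,\infty)$ such that for all $a,b,c\ge 0$: $a\star b=b\star a$; $a\star(b\star c)=(a\star b)\star c$; if $a\le b$ then $a\star c\le b\star c$; $a\star 0=a$; and $\star$ is continuous in its first variable with respect to the Euclidean topology. Given a nonempty set $Y$, a $\star$-metric on $Y$ is a function $\rho:Y\times Y\to[0,\infty)$ such that for all $x,y,z\in Y$: $\rho(x,y)=0$ iff $x=y$; $\rho(x,y)=\rho(y,x)$; and $\rho(x,y)\le \rho(x,z)\star \rho(z,y)$. Under the stated bound, $d_q^\star$ is a $\star$-metric on $X$. A $\star$-metric space $(Y,\rho)$ is totally bounded if for every $\epsilon>0$ there is a finite set $F\subseteq Y$ with $Y=\bigcup_{x\in F}\{y\in Y:\rho(x,y)<\epsilon\}$. *)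

theory Defs
  imports "HOL-Analysis.Analysis"
begin

definition t_definer :: "(real \<Rightarrow> real \<Rightarrow> real) \<Rightarrow> bool" where
  "t_definer s \<longleftrightarrow>
     (\<forall>a b. 0 \<le> a \<longrightarrow> 0 \<le> b \<longrightarrow> 0 \<le> s a b) \<and>
     (\<forall>a b. 0 \<le> a \<longrightarrow> 0 \<le> b \<longrightarrow> s a b = s b a) \<and>
     (\<forall>a b c. 0 \<le> a \<longrightarrow> 0 \<le> b \<longrightarrow> 0 \<le> c \<longrightarrow> s a (s b c) = s (s a b) c) \<and>
     (\<forall>a b c. 0 \<le> a \<longrightarrow> 0 \<le> b \<longrightarrow> 0 \<le> c \<longrightarrow> a \<le> b \<longrightarrow> s a c \<le> s b c) \<and>
     (\<forall>a. 0 \<le> a \<longrightarrow> s a 0 = a) \<and>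
     (\<forall>b. 0 \<le> b \<longrightarrow> continuous_on {0..} (\<lambda>a. s a b))"

definition star_metric :: "(real \<Rightarrow> real \<Rightarrow> real) \<Rightarrow> 'a set \<Rightarrow> ('a \<Rightarrow> 'a \<Rightarrow> real) \<Rightarrow> bool" where
  "star_metric s Y \<rho> \<longleftrightarrow> Y \<noteq> {} \<and>
     (\<forall>x\<in>Y. \<forall>y\<in>Y. 0 \<le> \<rho> x y) \<and>
     (\<forall>x\<in>Y. \<forall>y\<in>Y. \<rho> x y = 0 \<longleftrightarrow> x = y) \<and>
     (\<forall>x\<in>Y. \<forall>y\<in>Y. \<rho> x y = \<rho> y x) \<and>
     (\<forall>x\<in>Y. \<forall>y\<in>Y. \<forall>z\<in>Y. \<rho> x y \<le> s (\<rho> x z) (\<rho> z y))"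

definition star_totally_bounded :: "'a set \<Rightarrow> ('a \<Rightarrow> 'a \<Rightarrow> real) \<Rightarrow> bool" where
  "star_totally_bounded Y \<rho> \<longleftrightarrow>
     (\<forall>e>0. \<exists>F. finite F \<and> F \<subseteq> Y \<and> Y = (\<Union>x\<in>F. {y\<in>Y. \<rho> x y < e}))"

definition disj_union :: "nat \<Rightarrow> (nat \<Rightarrow> 'a set) \<Rightarrow> (nat \<times> 'a) set" where
  "disj_union n X = Sigma {1..n} X"

definition dq :: "(nat \<Rightarrow> 'a \<Rightarrow> 'a \<Rightarrow> real) \<Rightarrow> (nat \<times> 'a) \<Rightarrow> (nat \<times> 'a) \<Rightarrow> real" where
  "dq d p q = (if fst p = fst q then d (fst p) (snd p) (snd q) else 1)"

end

theory Submission
  imports Defs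
begin

text \<open>Two points in different summands are at distance 1, so for radii \<open>e \<le> 1\<close> an
  \<open>e\<close>-net of the union splits into \<open>e\<close>-nets of the summands, and conversely finitely many
  nets of the summands together form one of the union. Radii \<open>e > 1\<close> need no separate
  treatment, because an \<open>e\<close>-net is also an \<open>e'\<close>-net for every \<open>e' \<ge> e\<close>. Neither the
  \<open>\<star>\<close>-triangle inequality nor the bound \<open>d\<^sub>i \<le> 1\<close> enters this argument.\<close>

definition eps_net :: "'a set \<Rightarrow> ('a \<Rightarrow> 'a \<Rightarrow> real) \<Rightarrow> real \<Rightarrow> 'a set \<Rightarrow> bool" where
  "eps_net Y \<rho> e F \<longleftrightarrow> finite F \<and> F \<subseteq> Y \<and> (\<forall>y\<in>Y. \<exists>x\<in>F. \<rho> x y < e)"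

lemma star_totally_bounded_iff_eps_net:
  "star_totally_bounded Y \<rho> \<longleftrightarrow> (\<forall>e>0. \<exists>F. eps_net Y \<rho> e F)"
  unfolding star_totally_bounded_def eps_net_def by (intro all_cong ex_cong1) blast

lemma eps_net_mono: "eps_net Y \<rho> e F \<Longrightarrow> e \<le> e' \<Longrightarrow> eps_net Y \<rho> e' F"
  unfolding eps_net_def by force

lemma star_totally_bounded_iff_small_radii:
  assumes "0 < r"
  shows "star_totally_bounded Y \<rho> \<longleftrightarrow> (\<forall>e. 0 < e \<and> e \<le> r \<longrightarrow> (\<exists>F. eps_net Y \<rho> e F))"
proof -
  have "\<exists>F. eps_net Y \<rho> e F"
    if small: "\<forall>e. 0 < e \<and> e \<le> r \<longrightarrow> (\<exists>F. eps_net Y \<rho> e F)" and "0 < e" for e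
  proof -
    from \<open>0 < e\<close> \<open>0 < r\<close> have "0 < min e r \<and> min e r \<le> r" by simp
    with small obtain F where "eps_net Y \<rho> (min e r) F" by blast
    then show ?thesis using eps_net_mono[OF _ min.cobounded1] by blast
  qed
  then show ?thesis by (auto simp: star_totally_bounded_iff_eps_net)
qed

lemma eps_net_Sigma_component:
  assumes net: "eps_net (Sigma I X) (dq d) e F" and "e \<le> 1" and "i \<in> I"
  shows "eps_net (X i) (d i) e (snd ` {p \<in> F. fst p = i})"
  unfolding eps_net_def
proof (intro conjI ballI)
  show "finite (snd ` {p \<in> F. fst p = i})" using net by (simp add: eps_net_def)
  show "snd ` {p \<in> F. fst p = i} \<subseteq> X i" using net by (auto simp: eps_net_def)
next
  fix y assume "y \<in> X i"
  with net \<open>i \<in> I\<close> obtain j x where jx: "(j, x) \<in> F" "dq d (j, x) (i, y) < e"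
    unfolding eps_net_def by fastforce
  with \<open>e \<le> 1\<close> have "j = i" by (auto simp: dq_def split: if_splits)
  with jx show "\<exists>x\<in>snd ` {p \<in> F. fst p = i}. d i x y < e"
    by (force simp: dq_def)
qed

lemma eps_net_Sigma:
  assumes "finite I" and "\<And>i. i \<in> I \<Longrightarrow> eps_net (X i) (d i) e (G i)"
  shows "eps_net (Sigma I X) (dq d) e (Sigma I G)"
  unfolding eps_net_def
proof (intro conjI ballI)
  show "finite (Sigma I G)" and "Sigma I G \<subseteq> Sigma I X"
    using assms by (auto simp: eps_net_def)
next
  fix p assume "p \<in> Sigma I X"
  then obtain i y where "p = (i, y)" "i \<in> I" "y \<in> X i" by blast
  with assms(2) obtain x where "x \<in> G i" "d i x y < e"
    unfolding eps_net_def by blast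
  with \<open>p = (i, y)\<close> \<open>i \<in> I\<close> show "\<exists>q\<in>Sigma I G. dq d q p < e"
    by (auto simp: dq_def)
qed

lemma star_totally_bounded_Sigma_iff:
  assumes "finite I"
  shows "star_totally_bounded (Sigma I X) (dq d) \<longleftrightarrow>
         (\<forall>i\<in>I. star_totally_bounded (X i) (d i))"
proof
  assume union: "star_totally_bounded (Sigma I X) (dq d)"
  show "\<forall>i\<in>I. star_totally_bounded (X i) (d i)"
  proof (intro ballI)
    fix i assume "i \<in> I"
    have "\<exists>G. eps_net (X i) (d i) e G" if "0 < e" "e \<le> 1" for e
    proof -
      from union \<open>0 < e\<close> obtain F where "eps_net (Sigma I X) (dq d) e F"
        unfolding star_totally_bounded_iff_eps_net by blast
      with \<open>e \<le> 1\<close> \<open>i \<in> I\<close> show ?thesis by (blast dest: eps_net_Sigma_component)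
    qed
    then show "star_totally_bounded (X i) (d i)"
      by (simp add: star_totally_bounded_iff_small_radii[OF zero_less_one])
  qed
next
  assume components: "\<forall>i\<in>I. star_totally_bounded (X i) (d i)"
  show "star_totally_bounded (Sigma I X) (dq d)"
    unfolding star_totally_bounded_iff_eps_net
  proof (intro allI impI)
    fix e :: real assume "0 < e"
    with components have "\<forall>i\<in>I. \<exists>G. eps_net (X i) (d i) e G"
      unfolding star_totally_bounded_iff_eps_net by blast
    then obtain G where "\<And>i. i \<in> I \<Longrightarrow> eps_net (X i) (d i) e (G i)"
      by (metis bchoice)
    with \<open>finite I\<close> show "\<exists>F. eps_net (Sigma I X) (dq d) e F"
      by (blast intro: eps_net_Sigma)
  qed
qed

theorem theorem3p9:
  fixes s :: "real \<Rightarrow> real \<Rightarrow> real"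
    and n :: nat
    and X :: "nat \<Rightarrow> 'a set"
    and d :: "nat \<Rightarrow> 'a \<Rightarrow> 'a \<Rightarrow> real"
  assumes "t_definer s"
    and "\<And>i. i \<in> {1..n} \<Longrightarrow> star_metric s (X i) (d i)"
    and "\<And>i x y. i \<in> {1..n} \<Longrightarrow> x \<in> X i \<Longrightarrow> y \<in> X i \<Longrightarrow> d i x y \<le> 1"
  shows "star_totally_bounded (disj_union n X) (dq d) \<longleftrightarrow>
         (\<forall>i\<in>{1..n}. star_totally_bounded (X i) (d i))"
  unfolding disj_union_def by (rule star_totally_bounded_Sigma_iff) simp

end
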